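(* Let $\lambda,\mu$ be partitions with $|\mu|=|\lambda|$ and $d(\lambda,\mu)=2$, and write $S_\lambda\setminus S_\mu=\{\lambda_a-a+\frac12,\lambda_b-b+\frac12\}$ and $S_\mu\setminus S_\lambda=\{\mu_{a'}-a'+\frac12,\mu_{b'}-b'+\frac12\}$ with $1\le a<b$ and $1\le a'<b'$. Then there exist exactly two pairs $(\gamma,\gamma')$ with $\gamma$ a border strip of $\lambda$, $\gamma'$ a border strip of $\mu$ and $\lambda\setminus\gamma=\mu\setminus\gamma'$; denoting them $(\gamma_1,\gamma_1')$ and $(\gamma_2,\gamma_2')$ suitably, they satisfy: (i) $\gamma_1\subset\gamma_2$ and $\gamma_1'\subset\gamma_2'$; (ii) $|\gamma_1|=|\gamma_1'|=|\lambda_a-a-\mu_{a'}+a'|$ and $|\gamma_2|=|\gamma_2'|=|\lambda_a-a-\mu_{b'}+b'|$; (iii) if $\lambda_a-a>\mu_{a'}-a'$, then $\mathrm{ht}(\gamma_1)=a'-a$, $\mathrm{ht}(\gamma_1')=b-b'$, $\mathrm{ht}(\gamma_2)=b'-a-1$, $\mathrm{ht}(\gamma_2')=b-a'$; and if $\lambda_a-a<\mu_{a'}-a'$, then $\mathrm{ht}(\gamma_1)=b'-b$, $\mathrm{ht}(\gamma_1')=a-a'$, $\mathrm{ht}(\gamma_2)=b'-a$, $\mathrm{ht}(\gamma_2')=b-a'-1$.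
   Context: Partitions $\lambda=(\lambda_1\ge\lambda_2\ge\dots)$, with $\lambda_j=0$ beyond the length; $|\lambda|$ is the size, $\lambda'$ the transpose; $S_\lambda=\{\lambda_j-j+\frac12:j\ge1\}$. Modified Frobenius coordinates: if $d$ is the number of $i$ with $\lambda_i\ge i$, $c_i=\lambda_i-i+\frac12$, $c_i^*=-(\lambda'_i-i)-\frac12$, $C_\lambda=\{c_1,\dots,c_d,c_1^*,\dots,c_d^*\}$; Hamming distance $d(\lambda,\mu)=\frac12|C_\lambda\,\Delta\,C_\mu|$ (when $d(\lambda,\mu)=2$ one has $|S_\lambda\setminus S_\mu|=|S_\mu\setminus S_\lambda|=2$, so the indices $a,b,a',b'$ exist). Young diagram $Y_\lambda=\{(x,y):1\le y\le\lambda_x\}$. For partitions $\sigma$ with $Y_\sigma\subset Y_\lambda$, the skew diagram $\gamma=\lambda/\sigma$ is a border strip of $\lambda$ if it is edge-connected and contains no $2\times2$ block; then $\lambda\setminus\gamma:=\sigma$, $|\gamma|$ is the number of cells and $\mathrm{ht}(\gamma)$ is the number of rows it meets minus one. Inclusion $\gamma_1\subset\gamma_2$ is inclusion of sets of cells. *)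

theory Defs
  imports Complex_Main
begin

definition is_partition :: "nat list \<Rightarrow> bool" where
  "is_partition xs \<longleftrightarrow> sorted (rev xs) \<and> 0 \<notin> set xs"

definition part :: "nat list \<Rightarrow> nat \<Rightarrow> nat" where
  "part xs j = (if 1 \<le> j \<and> j \<le> length xs then xs ! (j - 1) else 0)"

definition psize :: "nat list \<Rightarrow> nat" where
  "psize xs = sum_list xs"

definition conj_part :: "nat list \<Rightarrow> nat \<Rightarrow> nat" where
  "conj_part xs i = card {x. 1 \<le> x \<and> i \<le> part xs x \<and> x \<le> length xs}"

definition S_set :: "nat list \<Rightarrow> real set" where
  "S_set xs = {real (part xs j) - real j + 1/2 | j. j \<ge> 1}"

definition frob_d :: "nat list \<Rightarrow> nat" where
  "frob_d xs = card {i. 1 \<le> i \<and> i \<le> part xs i}"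

definition C_set :: "nat list \<Rightarrow> real set" where
  "C_set xs = {real (part xs i) - real i + 1/2 | i. 1 \<le> i \<and> i \<le> frob_d xs}
            \<union> {- (real (conj_part xs i) - real i) - 1/2 | i. 1 \<le> i \<and> i \<le> frob_d xs}"

definition hamming :: "nat list \<Rightarrow> nat list \<Rightarrow> nat" where
  "hamming xs ys = card ((C_set xs - C_set ys) \<union> (C_set ys - C_set xs)) div 2"

definition young :: "nat list \<Rightarrow> (nat \<times> nat) set" where
  "young xs = {(x, y). 1 \<le> x \<and> 1 \<le> y \<and> y \<le> part xs x}"

definition cell_adj :: "(nat \<times> nat) set \<Rightarrow> nat \<times> nat \<Rightarrow> nat \<times> nat \<Rightarrow> bool" where
  "cell_adj G c d \<longleftrightarrow> c \<in> G \<and> d \<in> G \<and>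
     ((fst c = fst d \<and> (snd d = snd c + 1 \<or> snd c = snd d + 1)) \<or>
      (snd c = snd d \<and> (fst d = fst c + 1 \<or> fst c = fst d + 1)))"

definition edge_connected :: "(nat \<times> nat) set \<Rightarrow> bool" where
  "edge_connected G \<longleftrightarrow> (\<forall>c\<in>G. \<forall>d\<in>G. (cell_adj G)\<^sup>*\<^sup>* c d)"

definition no_2x2 :: "(nat \<times> nat) set \<Rightarrow> bool" where
  "no_2x2 G \<longleftrightarrow> \<not> (\<exists>x y. (x, y) \<in> G \<and> (x + 1, y) \<in> G \<and> (x, y + 1) \<in> G \<and> (x + 1, y + 1) \<in> G)"

definition border_strip :: "nat list \<Rightarrow> (nat \<times> nat) set \<Rightarrow> bool" where
  "border_strip lam G \<longleftrightarrow>
     (\<exists>sigma. is_partition sigma \<and> young sigma \<subseteq> young lam \<and> G = young lam - young sigma)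
     \<and> G \<noteq> {} \<and> edge_connected G \<and> no_2x2 G"

definition ht :: "(nat \<times> nat) set \<Rightarrow> int" where
  "ht G = int (card (fst ` G)) - 1"

end

theory Submission
  imports Defs
begin

text \<open>A partition \<lambda> is encoded by its set of beta numbers \<lambda>_j - j, i.e. the set S_\<lambda>
  shifted by 1/2. Removing a border strip from \<lambda> amounts to sliding one bead of this set
  from a position x down to a free position y < x: the strip has x - y cells and its height
  is the number of beads strictly between y and x. If the bead sets L of \<lambda> and M of \<mu>
  satisfy L - M = {A1, A2} and M - L = {B1, B2}, then |\<lambda>| = |\<mu>| forces
  A1 + A2 = B1 + B2, so for instance A2 < B2 < B1 < A1. A set reachable by one slide from L
  and by one slide from M must then arise from L by moving A1 to B1 or to B2; both work,
  the second slide continues the first (whence the nesting of the strips), and sizes and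
  heights are read off by counting beads. The other order reduces to this one by
  exchanging \<lambda> and \<mu>.\<close>

section \<open>Beta numbers\<close>

definition beta :: "nat list \<Rightarrow> nat \<Rightarrow> int" where
  "beta xs j = int (part xs j) - int j"

definition beta_set :: "nat list \<Rightarrow> int set" where
  "beta_set xs = {beta xs j | j. 1 \<le> j}"

definition num_above :: "int set \<Rightarrow> int \<Rightarrow> nat" where
  "num_above T v = card {z \<in> T. v < z}"

lemma part_antimono:
  assumes "is_partition xs" "1 \<le> i" "i \<le> j"
  shows "part xs j \<le> part xs i"
proof (cases "j \<le> length xs")
  case True
  then show ?thesis using assms sorted_rev_nth_mono[of xs "i-1" "j-1"]
    by (auto simp: is_partition_def part_def)
qed (simp add: part_def)

lemma part_beyond_length: "length xs < j \<Longrightarrow> part xs j = 0"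
  by (simp add: part_def)

lemma beta_strict_antimono:
  assumes "is_partition xs" "1 \<le> i" "i < j"
  shows "beta xs j < beta xs i"
  using part_antimono[OF assms(1,2), of j] assms by (simp add: beta_def)

lemma beta_less_iff:
  assumes "is_partition xs" "1 \<le> i" "1 \<le> j"
  shows "beta xs j < beta xs i \<longleftrightarrow> i < j"
  using beta_strict_antimono[OF assms(1)] assms by (metis less_asym' linorder_neqE_nat)

lemma beta_le_iff:
  assumes "is_partition xs" "1 \<le> i" "1 \<le> j"
  shows "beta xs j \<le> beta xs i \<longleftrightarrow> i \<le> j"
  using beta_less_iff[OF assms(1,3,2)] by linarith

lemma inj_on_beta: "is_partition xs \<Longrightarrow> inj_on (beta xs) {1..}"
  by (rule inj_onI) (metis atLeast_iff beta_le_iff order_antisym order_refl)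

lemma beta_beyond_length: "length xs < j \<Longrightarrow> beta xs j = - int j"
  by (simp add: beta_def part_beyond_length)

lemma mem_beta_set: "z \<in> beta_set xs \<longleftrightarrow> (\<exists>j\<ge>1. z = beta xs j)"
  by (auto simp: beta_set_def)

lemma beta_set_eq_image: "beta_set xs = beta xs ` {1..}"
  by (auto simp: beta_set_def)

lemma S_set_eq_image_beta_set: "S_set xs = (\<lambda>z. real_of_int z + 1/2) ` beta_set xs"
  unfolding S_set_def beta_set_def beta_def by force

lemma beta_set_diff_if_S_set_diff:
  assumes "S_set xs - S_set ys = {real (part xs i) - real i + 1/2, real (part xs j) - real j + 1/2}"
  shows "beta_set xs - beta_set ys = {beta xs i, beta xs j}"
proof -
  let ?h = "\<lambda>z::int. real_of_int z + 1/2"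
  have inj: "inj ?h" by (rule injI) simp
  have "?h ` (beta_set xs - beta_set ys) = ?h ` {beta xs i, beta xs j}"
    using assms unfolding S_set_eq_image_beta_set image_set_diff[OF inj, symmetric]
    by (simp add: beta_def)
  then show ?thesis by (simp only: inj_image_eq_iff[OF inj])
qed

lemma finite_beta_set_above:
  assumes "is_partition xs"
  shows "finite {z \<in> beta_set xs. v < z}"
proof (rule finite_subset)
  show "{z \<in> beta_set xs. v < z} \<subseteq> {v<..beta xs 1}"
    using beta_le_iff[OF assms] by (auto simp: mem_beta_set)
qed simp

lemma num_above_beta_set:
  assumes "is_partition xs" and "\<And>j. 1 \<le> j \<Longrightarrow> v < beta xs j \<longleftrightarrow> j \<le> q"
  shows "num_above (beta_set xs) v = q"
proof -
  have "{z \<in> beta_set xs. v < z} = beta xs ` {1..q}"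
    using assms(2) by (auto simp: mem_beta_set)
  moreover have "inj_on (beta xs) {1..q}"
    using inj_on_beta[OF assms(1)] by (rule inj_on_subset) auto
  ultimately show ?thesis by (simp add: num_above_def card_image)
qed

lemma num_above_beta:
  assumes "is_partition xs" "1 \<le> j"
  shows "num_above (beta_set xs) (beta xs j) = j - 1"
  by (rule num_above_beta_set[OF assms(1)]) (use beta_less_iff[OF assms(1) _ assms(2)] in auto)

lemma num_above_between_betas:
  assumes "is_partition xs" "1 \<le> q" "beta xs (q+1) < v" "v < beta xs q"
  shows "num_above (beta_set xs) v = q"
proof (rule num_above_beta_set[OF assms(1)])
  fix j :: nat assume j: "1 \<le> j"
  show "v < beta xs j \<longleftrightarrow> j \<le> q"
  proof
    assume "v < beta xs j"
    then show "j \<le> q"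
      using beta_le_iff[OF assms(1) _ j, of "q+1"] assms(3) by fastforce
  next
    assume "j \<le> q"
    then show "v < beta xs j"
      using beta_le_iff[OF assms(1) j assms(2)] assms(4) by simp
  qed
qed

lemma not_mem_beta_set_between:
  assumes xs: "is_partition xs" and "1 \<le> q" "beta xs (q+1) < v" "v < beta xs q"
  shows "v \<notin> beta_set xs"
proof
  assume "v \<in> beta_set xs"
  then obtain j where "1 \<le> j" "v = beta xs j" by (auto simp: mem_beta_set)
  then show False
    using assms beta_le_iff[OF xs _ \<open>1 \<le> j\<close>, of "q+1"] beta_le_iff[OF xs \<open>1 \<le> j\<close> \<open>1 \<le> q\<close>]
    by (cases "j \<le> q") auto
qed

lemma num_above_empty [simp]: "num_above {} v = 0"
  by (simp add: num_above_def)

lemma num_above_insert [simp]: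
  assumes "finite T" "x \<notin> T"
  shows "num_above (insert x T) v = of_bool (v < x) + num_above T v"
proof -
  have "{z \<in> insert x T. v < z} = (if v < x then insert x {z \<in> T. v < z} else {z \<in> T. v < z})"
    by auto
  then show ?thesis using assms by (simp add: num_above_def)
qed

lemma num_above_replace:
  assumes fin: "finite {z \<in> T. v < z}" and "X \<subseteq> T" "Y \<inter> T = {}" "finite Y"
  shows "int (num_above (T - X \<union> Y) v) = int (num_above T v) - int (num_above X v) + int (num_above Y v)"
proof -
  let ?T = "{z \<in> T. v < z}" and ?X = "{z \<in> X. v < z}" and ?Y = "{z \<in> Y. v < z}"
  have X: "?X \<subseteq> ?T" "finite ?X" using assms(2) fin by (auto elim!: finite_subset[rotated])
  have "{z \<in> T - X \<union> Y. v < z} = (?T - ?X) \<union> ?Y"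
    by auto
  moreover have "card ((?T - ?X) \<union> ?Y) = card (?T - ?X) + card ?Y"
    by (rule card_Un_disjoint) (use fin assms(3,4) in auto)
  ultimately have "card {z \<in> T - X \<union> Y. v < z} = card (?T - ?X) + card ?Y"
    by simp
  then show ?thesis
    using card_Diff_subset[OF X(2,1)] card_mono[OF fin X(1)] by (simp add: num_above_def)
qed

lemma mem_young: "(x, y) \<in> young xs \<longleftrightarrow> 1 \<le> x \<and> 1 \<le> y \<and> y \<le> part xs x"
  by (simp add: young_def)

lemma young_subset_iff: "young xs \<subseteq> young ys \<longleftrightarrow> (\<forall>j\<ge>1. part xs j \<le> part ys j)"
proof
  assume sub: "young xs \<subseteq> young ys"
  show "\<forall>j\<ge>1. part xs j \<le> part ys j"
  proof (intro allI impI)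
    fix j :: nat assume "1 \<le> j"
    then show "part xs j \<le> part ys j"
      using subsetD[OF sub, of "(j, part xs j)"] by (cases "part xs j = 0") (auto simp: mem_young)
  qed
qed (auto simp: young_def)

lemma young_eq_iff: "young xs = young ys \<longleftrightarrow> (\<forall>j\<ge>1. part xs j = part ys j)"
  unfolding set_eq_subset young_subset_iff by (auto intro: order_antisym)

lemma part_eq_if_beta_set_eq:
  assumes xs: "is_partition xs" and ys: "is_partition ys"
    and eq: "beta_set xs = beta_set ys" and j: "1 \<le> j"
  shows "part xs j = part ys j"
proof -
  have "beta xs j \<in> beta_set ys" using j unfolding eq[symmetric] by (auto simp: mem_beta_set)
  then obtain k where k: "1 \<le> k" "beta xs j = beta ys k" by (auto simp: mem_beta_set)
  have "j - 1 = k - 1"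
    using num_above_beta[OF xs j] num_above_beta[OF ys k(1)] eq k(2) by simp
  then have "j = k" using j k(1) by simp
  then show ?thesis using k(2) by (simp add: beta_def)
qed

lemma young_eq_iff_beta_set_eq:
  assumes "is_partition xs" "is_partition ys"
  shows "young xs = young ys \<longleftrightarrow> beta_set xs = beta_set ys"
proof
  assume "young xs = young ys"
  then show "beta_set xs = beta_set ys"
    unfolding young_eq_iff beta_set_def beta_def by (metis (no_types, lifting))
next
  assume "beta_set xs = beta_set ys"
  then show "young xs = young ys"
    using part_eq_if_beta_set_eq[OF assms] by (simp add: young_eq_iff)
qed

section \<open>Border strips by rows\<close>

text \<open>young lam - young sg is a border strip occupying rows r to q: between these rows each
  row of sg ends one column before the next row of lam.\<close>

definition strip_rows :: "nat list \<Rightarrow> nat list \<Rightarrow> nat \<Rightarrow> nat \<Rightarrow> bool" where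
  "strip_rows lam sg r q \<longleftrightarrow> 1 \<le> r \<and> r \<le> q \<and>
     (\<forall>i. 1 \<le> i \<and> (i < r \<or> q < i) \<longrightarrow> part sg i = part lam i) \<and>
     (\<forall>i. r \<le> i \<and> i < q \<longrightarrow> part sg i + 1 = part lam (i+1)) \<and>
     part sg q < part lam q \<and> part lam (q+1) \<le> part sg q"

lemma symp_cell_adj: "symp (cell_adj G)"
  by (rule sympI) (auto simp: cell_adj_def)

lemma cell_adj_path_crosses_row:
  assumes "(cell_adj G)\<^sup>*\<^sup>* c d" "fst c \<le> i" "i < fst d"
  shows "\<exists>y. (i, y) \<in> G \<and> (i+1, y) \<in> G"
  using assms
proof (induction rule: rtranclp_induct)
  case (step e d)
  show ?case
  proof (cases "fst e \<le> i")
    case True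
    with step(2,5) have "fst e = i" "fst d = i + 1" "snd d = snd e" "e \<in> G" "d \<in> G"
      unfolding cell_adj_def by auto
    then show ?thesis by (metis prod.collapse)
  qed (use step in simp)
qed simp

lemma cell_adj_path_in_row:
  assumes "\<And>y. min y1 y2 \<le> y \<Longrightarrow> y \<le> max y1 y2 \<Longrightarrow> (i, y) \<in> G"
  shows "(cell_adj G)\<^sup>*\<^sup>* (i, y1) (i, y2)"
proof -
  have right: "(cell_adj G)\<^sup>*\<^sup>* (i, y) (i, y + k)"
    if "\<And>z. y \<le> z \<Longrightarrow> z \<le> y + k \<Longrightarrow> (i, z) \<in> G" for y k
    using that
  proof (induction k)
    case (Suc k)
    then have "cell_adj G (i, y + k) (i, y + Suc k)" unfolding cell_adj_def by auto
    with Suc show ?case by (simp add: rtranclp.rtrancl_into_rtrancl)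
  qed simp
  show ?thesis
  proof (cases "y1 \<le> y2")
    case True
    then show ?thesis using right[of y1 "y2 - y1"] assms by auto
  next
    case False
    then have "(cell_adj G)\<^sup>*\<^sup>* (i, y2) (i, y1)" using right[of y2 "y1 - y2"] assms by auto
    then show ?thesis using symp_rtranclp[OF symp_cell_adj] by (metis sympD)
  qed
qed

lemma part_succ_le_if_no_2x2:
  assumes lam: "is_partition lam" and sg: "is_partition sg"
    and no2x2: "no_2x2 (young lam - young sg)" and i: "1 \<le> i"
  shows "part lam (i+1) \<le> part sg i + 1"
proof (rule ccontr)
  let ?y = "part sg i + 1"
  assume "\<not> ?thesis"
  moreover have "part sg (i+1) \<le> part sg i" "part lam (i+1) \<le> part lam i"
    using part_antimono[OF sg i] part_antimono[OF lam i] by simp_all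
  ultimately have "(i, ?y) \<in> young lam - young sg" "(i+1, ?y) \<in> young lam - young sg"
    "(i, ?y+1) \<in> young lam - young sg" "(i+1, ?y+1) \<in> young lam - young sg"
    using i by (auto simp: mem_young)
  then show False using no2x2 unfolding no_2x2_def by blast
qed

lemma part_succ_eq_if_connected:
  assumes lam: "is_partition lam" and sg: "is_partition sg"
    and no2x2: "no_2x2 (young lam - young sg)" and conn: "edge_connected (young lam - young sg)"
    and cells: "(r, y) \<in> young lam - young sg" "(q, y') \<in> young lam - young sg"
    and i: "r \<le> i" "i < q"
  shows "part sg i + 1 = part lam (i+1)"
proof -
  let ?G = "young lam - young sg"
  have "(cell_adj ?G)\<^sup>*\<^sup>* (r, y) (q, y')"
    using conn cells unfolding edge_connected_def by blast
  then obtain z where "(i, z) \<in> ?G" "(i+1, z) \<in> ?G"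
    using cell_adj_path_crosses_row[of ?G "(r, y)" "(q, y')" i] i by auto
  then have "1 \<le> i" "part sg i < part lam (i+1)" by (auto simp: mem_young)
  then show ?thesis using part_succ_le_if_no_2x2[OF lam sg no2x2] by fastforce
qed

lemma strip_rows_if_border_strip:
  assumes lam: "is_partition lam" and sg: "is_partition sg"
    and sub: "young sg \<subseteq> young lam" and ne: "young lam - young sg \<noteq> {}"
    and conn: "edge_connected (young lam - young sg)" and no2x2: "no_2x2 (young lam - young sg)"
  shows "\<exists>r q. strip_rows lam sg r q"
proof -
  let ?G = "young lam - young sg"
  define R where "R = {i. 1 \<le> i \<and> part sg i < part lam i}"
  have R_iff: "i \<in> R \<longleftrightarrow> (i, part lam i) \<in> ?G" for i
    by (auto simp: R_def mem_young)
  have "R \<subseteq> {1..length lam}"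
  proof
    fix i assume "i \<in> R"
    then show "i \<in> {1..length lam}"
      using part_beyond_length[of lam i] by (cases "length lam < i") (auto simp: R_def)
  qed
  then have finR: "finite R" by (rule finite_subset) simp
  obtain x y where "(x, y) \<in> ?G" using ne by auto
  then have "x \<in> R" by (auto simp: R_def mem_young)
  then have neR: "R \<noteq> {}" by auto
  define r where "r = Min R"
  define q where "q = Max R"
  have rR: "r \<in> R" and qR: "q \<in> R" and rq: "r \<le> q"
    using finR neR by (auto simp: r_def q_def)
  have r1: "1 \<le> r" using rR by (simp add: R_def)
  have outside: "part sg i = part lam i" if "1 \<le> i" "i < r \<or> q < i" for i
  proof -
    have "i \<notin> R"
      using that Min_le[OF finR, of i] Max_ge[OF finR, of i] unfolding r_def q_def by auto
    moreover have "part sg i \<le> part lam i" using sub that(1) unfolding young_subset_iff by blast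
    ultimately show ?thesis using that(1) by (simp add: R_def)
  qed
  have inside: "part sg i + 1 = part lam (i+1)" if "r \<le> i" "i < q" for i
    using part_succ_eq_if_connected[OF lam sg no2x2 conn, of r "part lam r" q "part lam q" i]
      rR qR R_iff that by blast
  have "part lam (q+1) \<le> part sg q"
    using outside[of "q+1"] part_antimono[OF sg, of q "q+1"] r1 rq by simp
  then show ?thesis
    unfolding strip_rows_def using r1 rq outside inside qR by (auto simp: R_def)
qed

lemma strip_rows_part_less:
  assumes lam: "is_partition lam" and strip: "strip_rows lam sg r q" and "r \<le> i" "i \<le> q"
  shows "part sg i < part lam i"
proof (cases "i = q")
  case False
  then have "part sg i + 1 = part lam (i+1)" "1 \<le> i"
    using strip assms(3,4) unfolding strip_rows_def by auto
  then show ?thesis using part_antimono[OF lam, of i "i+1"] by simp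
qed (use strip in \<open>simp add: strip_rows_def\<close>)

lemma young_subset_if_strip_rows:
  assumes "is_partition lam" "strip_rows lam sg r q"
  shows "young sg \<subseteq> young lam"
  unfolding young_subset_iff
  using strip_rows_part_less[OF assms] assms(2) unfolding strip_rows_def
  by (metis less_imp_le_nat not_le order_refl)

lemma rows_of_strip_rows:
  assumes lam: "is_partition lam" and strip: "strip_rows lam sg r q"
  shows "fst ` (young lam - young sg) = {r..q}"
proof
  show "fst ` (young lam - young sg) \<subseteq> {r..q}"
    using strip unfolding strip_rows_def by (force simp: mem_young)
  show "{r..q} \<subseteq> fst ` (young lam - young sg)"
  proof
    fix i assume i: "i \<in> {r..q}"
    then have "part sg i < part lam i" "1 \<le> i"
      using strip_rows_part_less[OF assms] strip by (auto simp: strip_rows_def)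
    then have "(i, part lam i) \<in> young lam - young sg" by (auto simp: mem_young)
    then show "i \<in> fst ` (young lam - young sg)" by force
  qed
qed

lemma no_2x2_if_strip_rows:
  assumes lam: "is_partition lam" and strip: "strip_rows lam sg r q"
  shows "no_2x2 (young lam - young sg)"
  unfolding no_2x2_def
proof
  let ?G = "young lam - young sg"
  assume "\<exists>x y. (x, y) \<in> ?G \<and> (x + 1, y) \<in> ?G \<and> (x, y + 1) \<in> ?G \<and> (x + 1, y + 1) \<in> ?G"
  then obtain x y where c: "(x, y) \<in> ?G" "(x + 1, y) \<in> ?G" "(x + 1, y + 1) \<in> ?G" by blast
  have "r \<le> x" "x + 1 \<le> q"
    using c(1,2) rows_of_strip_rows[OF assms] by (force, force)
  then have "part sg x + 1 = part lam (x+1)" using strip by (simp add: strip_rows_def)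
  then show False using c(1,3) by (auto simp: mem_young)
qed

lemma edge_connected_if_strip_rows:
  assumes lam: "is_partition lam" and strip: "strip_rows lam sg r q"
  shows "edge_connected (young lam - young sg)"
proof -
  let ?G = "young lam - young sg"
  have rows: "r \<le> i \<and> i \<le> q" if "(i, y) \<in> ?G" for i y
    using that rows_of_strip_rows[OF assms] by force
  have to_end: "(cell_adj ?G)\<^sup>*\<^sup>* (i, y) (q, part lam q)" if "q - i = n" "(i, y) \<in> ?G" for n i y
    using that
  proof (induction n arbitrary: i y)
    case 0
    then have "i = q" using rows by fastforce
    have "(cell_adj ?G)\<^sup>*\<^sup>* (q, y) (q, part lam q)"
      using 0(2) \<open>i = q\<close> by (intro cell_adj_path_in_row) (auto simp: mem_young)
    with \<open>i = q\<close> show ?case by simp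
  next
    case (Suc n)
    have i: "r \<le> i" "i < q" "1 \<le> i" using rows[OF Suc(3)] Suc(2) strip by (auto simp: strip_rows_def)
    let ?y = "part lam (i+1)"
    have step: "part sg i + 1 = ?y" using strip i by (simp add: strip_rows_def)
    have c1: "(i, ?y) \<in> ?G" using step i part_antimono[OF lam, of i "i+1"] by (simp add: mem_young)
    have c2: "(i+1, ?y) \<in> ?G" using strip_rows_part_less[OF assms, of "i+1"] i by (simp add: mem_young)
    have "(cell_adj ?G)\<^sup>*\<^sup>* (i, y) (i, ?y)"
      using Suc(3) c1 by (intro cell_adj_path_in_row) (auto simp: mem_young)
    moreover have "cell_adj ?G (i, ?y) (i+1, ?y)"
      using c1 c2 unfolding cell_adj_def by simp
    moreover have "(cell_adj ?G)\<^sup>*\<^sup>* (i+1, ?y) (q, part lam q)"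
      using Suc.IH[of "i+1"] Suc(2) c2 by simp
    ultimately show ?case by (meson converse_rtranclp_into_rtranclp rtranclp_trans)
  qed
  show ?thesis
    unfolding edge_connected_def
  proof (intro ballI)
    fix c d assume "c \<in> ?G" "d \<in> ?G"
    then have "(cell_adj ?G)\<^sup>*\<^sup>* c (q, part lam q)" "(cell_adj ?G)\<^sup>*\<^sup>* (q, part lam q) d"
      using to_end symp_rtranclp[OF symp_cell_adj] by (metis prod.collapse sympD)+
    then show "(cell_adj ?G)\<^sup>*\<^sup>* c d" by (rule rtranclp_trans)
  qed
qed

lemma border_strip_if_strip_rows:
  assumes "is_partition lam" "is_partition sg" "strip_rows lam sg r q"
  shows "border_strip lam (young lam - young sg)"
proof -
  have "(q, part lam q) \<in> young lam - young sg"
    using assms(3) by (auto simp: strip_rows_def mem_young)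
  then show ?thesis
    unfolding border_strip_def
    using assms young_subset_if_strip_rows edge_connected_if_strip_rows no_2x2_if_strip_rows
    by blast
qed

lemma ht_strip_rows:
  assumes "is_partition lam" "strip_rows lam sg r q"
  shows "ht (young lam - young sg) = int q - int r"
  using rows_of_strip_rows[OF assms] assms(2) by (simp add: ht_def strip_rows_def)

lemma beta_set_strip_rows:
  assumes lam: "is_partition lam" and strip: "strip_rows lam sg r q"
  shows "beta_set sg = beta_set lam - {beta lam r} \<union> {beta sg q}"
proof -
  have r: "1 \<le> r" "r \<le> q" using strip by (auto simp: strip_rows_def)
  let ?out = "{1..} - {r..q}"
  have "{1..} = ?out \<union> {r..<q} \<union> {q}" using r by auto
  then have "beta_set sg = beta sg ` ?out \<union> beta sg ` {r..<q} \<union> {beta sg q}"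
    unfolding beta_set_eq_image by (metis image_Un image_insert image_empty)
  also have "beta sg ` ?out = beta lam ` ?out"
    using strip by (intro image_cong) (auto simp: strip_rows_def beta_def)
  also have "beta sg ` {r..<q} = beta lam ` Suc ` {r..<q}"
    unfolding image_image using strip by (intro image_cong) (auto simp: strip_rows_def beta_def)
  also have "beta lam ` ?out \<union> beta lam ` Suc ` {r..<q} = beta lam ` ({1..} - {r})"
  proof -
    have "?out \<union> Suc ` {r..<q} = {1..} - {r}"
      using r by (auto simp: image_Suc_atLeastLessThan)
    then show ?thesis by (metis image_Un)
  qed
  also have "\<dots> = beta_set lam - {beta lam r}"
    unfolding beta_set_eq_image using r inj_on_beta[OF lam] by (subst inj_on_image_set_diff) auto
  finally show ?thesis .
qed

lemma partition_with_parts: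
  fixes s :: "nat \<Rightarrow> nat"
  assumes mono: "\<And>i. 1 \<le> i \<Longrightarrow> s (i+1) \<le> s i" and zero: "\<And>j. N < j \<Longrightarrow> s j = 0"
  obtains sg where "is_partition sg" "\<And>j. 1 \<le> j \<Longrightarrow> part sg j = s j"
proof -
  have anti: "s j \<le> s i" if "1 \<le> i" "i \<le> j" for i j
    using that(2)
  proof (induction j rule: dec_induct)
    case (step n)
    then show ?case using mono[of n] that(1) by simp
  qed simp
  define M where "M = (LEAST k. s (k+1) = 0)"
  have sM: "s (M+1) = 0" unfolding M_def by (rule LeastI[of _ N]) (use zero in simp)
  have pos: "0 < s j" if "1 \<le> j" "j \<le> M" for j
  proof (rule ccontr)
    assume "\<not> 0 < s j"
    then have "M \<le> j - 1" unfolding M_def using that by (intro Least_le) simp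
    then show False using that by simp
  qed
  have beyond: "s j = 0" if "M < j" for j
    using anti[of "M+1" j] sM that by simp
  define sg where "sg = map s [1..<M+1]"
  have nth: "sg ! i = s (i+1)" if "i < M" for i
    using that by (simp add: sg_def nth_map_upt del: upt_Suc)
  have "0 \<notin> set sg"
  proof
    assume "0 \<in> set sg"
    then obtain x where "x \<in> {1..<M+1}" "s x = 0" by (auto simp: sg_def simp del: upt_Suc)
    then show False using pos[of x] by simp
  qed
  then have "is_partition sg"
    unfolding is_partition_def sorted_rev_iff_nth_mono using nth anti by (simp add: sg_def del: upt_Suc)
  moreover have "part sg j = s j" if "1 \<le> j" for j
    using that nth[of "j-1"] beyond[of j] by (auto simp: part_def sg_def simp del: upt_Suc)
  ultimately show ?thesis using that by blast
qed

lemma strip_rows_exists: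
  assumes lam: "is_partition lam" and r: "1 \<le> r" "r \<le> q"
    and y: "beta lam (q+1) < y" "y < beta lam q"
  obtains sg where "is_partition sg" "strip_rows lam sg r q" "beta sg q = y"
proof -
  have y': "int (part lam (q+1)) \<le> y + int q" "y + int q < int (part lam q)"
    using y by (simp_all add: beta_def)
  define s where "s i = (if i < r \<or> q < i then part lam i
    else if i < q then part lam (i+1) - 1 else nat (y + int q))" for i
  have anti: "part lam j \<le> part lam i" if "1 \<le> i" "i \<le> j" for i j
    using part_antimono[OF lam that] .
  have "s (i+1) \<le> s i" if i: "1 \<le> i" for i
  proof -
    have "part lam (i+1) \<le> part lam i" "part lam (i+2) \<le> part lam (i+1)"
      "i + 1 \<le> q \<Longrightarrow> part lam q \<le> part lam (i+1)" "part lam q \<le> part lam r"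
      using anti i r by simp_all
    then show ?thesis unfolding s_def using y' r by (auto simp: nat_le_iff le_nat_iff)
  qed
  moreover have "s j = 0" if "length lam + q < j" for j
    using that part_beyond_length[of lam j] by (simp add: s_def)
  ultimately obtain sg where sg: "is_partition sg" "\<And>j. 1 \<le> j \<Longrightarrow> part sg j = s j"
    using partition_with_parts by metis
  have "part sg i + 1 = part lam (i+1)" if "r \<le> i" "i < q" for i
    using sg(2)[of i] anti[of "i+1" q] that r y' by (simp add: s_def)
  then have "strip_rows lam sg r q"
    unfolding strip_rows_def using sg(2) r y' by (auto simp: s_def nat_less_iff le_nat_iff)
  moreover have "beta sg q = y" using sg(2) r y' by (simp add: s_def beta_def)
  ultimately show ?thesis using sg(1) that by blast
qed

section \<open>Sizes\<close>

lemma sum_part_eq_psize: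
  assumes "length xs \<le> N"
  shows "(\<Sum>j = 1..N. part xs j) = psize xs"
proof -
  have "(\<Sum>j = 1..N. part xs j) = (\<Sum>i<N. part xs (Suc i))"
    using sum.atLeast1_atMost_eq[of "part xs" N] by simp
  also have "\<dots> = (\<Sum>i<length xs. part xs (Suc i))"
    using assms by (intro sum.mono_neutral_right) (auto simp: part_def)
  also have "\<dots> = (\<Sum>i<length xs. xs ! i)"
    by (intro sum.cong) (auto simp: part_def)
  finally show ?thesis by (simp add: psize_def sum_list_sum_nth lessThan_atLeast0)
qed

lemma young_eq_Sigma: "young xs = (SIGMA i:{1..length xs}. {1..part xs i})"
  by (auto simp: young_def part_def split: if_splits)

lemma finite_young: "finite (young xs)"
  unfolding young_eq_Sigma by simp

lemma card_young: "card (young xs) = psize xs"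
  unfolding young_eq_Sigma using sum_part_eq_psize[OF order_refl] by simp

lemma card_young_diff:
  assumes "young sg \<subseteq> young lam"
  shows "int (card (young lam - young sg)) = int (psize lam) - int (psize sg)"
  using card_Diff_subset[OF finite_subset[OF assms finite_young] assms] card_mono[OF finite_young assms]
  by (simp add: card_young of_nat_diff)

lemma beta_set_window:
  assumes "is_partition xs" "length xs \<le> N"
  shows "beta_set xs \<inter> {- int N..} = beta xs ` {1..N}"
proof -
  have "j \<le> N" if "1 \<le> j" "- int N \<le> beta xs j" for j
    using that assms(2) beta_beyond_length[of xs j] by (cases "length xs < j") auto
  then show ?thesis by (auto simp: mem_beta_set beta_def)
qed

lemma beta_set_below_window:
  assumes "length xs \<le> N"
  shows "beta_set xs - {- int N..} = {..< - int N}"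
proof
  show "beta_set xs - {- int N..} \<subseteq> {..< - int N}" by auto
  show "{..< - int N} \<subseteq> beta_set xs - {- int N..}"
  proof
    fix z assume z: "z \<in> {..< - int N}"
    then have "1 \<le> nat (- z)" "z = beta xs (nat (- z))"
      using assms beta_beyond_length[of xs "nat (- z)"] by simp_all
    then have "z \<in> beta_set xs" unfolding mem_beta_set by blast
    then show "z \<in> beta_set xs - {- int N..}" using z by simp
  qed
qed

lemma sum_beta_set_window:
  assumes "is_partition xs" "length xs \<le> N"
  shows "\<Sum>(beta_set xs \<inter> {- int N..}) = int (psize xs) - (\<Sum>j = 1..N. int j)"
proof -
  have "\<Sum>(beta_set xs \<inter> {- int N..}) = (\<Sum>j = 1..N. beta xs j)"
    unfolding beta_set_window[OF assms]
    using inj_on_subset[OF inj_on_beta[OF assms(1)]] by (simp add: sum.reindex)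
  also have "\<dots> = (\<Sum>j = 1..N. int (part xs j)) - (\<Sum>j = 1..N. int j)"
    by (simp add: beta_def sum_subtractf)
  finally show ?thesis
    using sum_part_eq_psize[OF assms(2)] by (metis of_nat_sum)
qed

lemma psize_diff_eq_sum_beta_set_diff:
  assumes xs: "is_partition xs" and ys: "is_partition ys"
  shows "int (psize xs) - int (psize ys) = \<Sum>(beta_set xs - beta_set ys) - \<Sum>(beta_set ys - beta_set xs)"
proof -
  define N where "N = max (length xs) (length ys)"
  have N: "length xs \<le> N" "length ys \<le> N" by (auto simp: N_def)
  let ?W = "{- int N..}"
  let ?X = "beta_set xs \<inter> ?W" and ?Y = "beta_set ys \<inter> ?W"
  have "beta_set xs - ?W = beta_set ys - ?W"
    using beta_set_below_window[OF N(1)] beta_set_below_window[OF N(2)] by simp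
  then have diffs: "beta_set xs - beta_set ys = ?X - (?X \<inter> ?Y)" "beta_set ys - beta_set xs = ?Y - (?X \<inter> ?Y)"
    by blast+
  have fin: "finite ?X" "finite ?Y"
    using beta_set_window[OF xs N(1)] beta_set_window[OF ys N(2)] by simp_all
  have "\<Sum>(?X - (?X \<inter> ?Y)) = \<Sum>?X - \<Sum>(?X \<inter> ?Y)" "\<Sum>(?Y - (?X \<inter> ?Y)) = \<Sum>?Y - \<Sum>(?X \<inter> ?Y)"
    using fin by (auto intro: sum_diff)
  then show ?thesis
    unfolding diffs using sum_beta_set_window[OF xs N(1)] sum_beta_set_window[OF ys N(2)] by simp
qed

section \<open>Border strips as bead slides\<close>

definition bead_slide :: "int set \<Rightarrow> int \<Rightarrow> int \<Rightarrow> int set \<Rightarrow> bool" where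
  "bead_slide T x y T' \<longleftrightarrow> x \<in> T \<and> y \<notin> T \<and> y < x \<and> T' = T - {x} \<union> {y}"

lemma bead_slide_if_strip_rows:
  assumes lam: "is_partition lam" and strip: "strip_rows lam sg r q"
  shows "bead_slide (beta_set lam) (beta lam r) (beta sg q) (beta_set sg)"
proof -
  have r: "1 \<le> r" "r \<le> q"
    and between: "beta lam (q+1) < beta sg q" "beta sg q < beta lam q"
    using strip by (auto simp: strip_rows_def beta_def)
  have "beta lam q \<le> beta lam r" using beta_le_iff[OF lam r(1)] r by auto
  then show ?thesis
    unfolding bead_slide_def
    using beta_set_strip_rows[OF assms] not_mem_beta_set_between[OF lam _ between] r between
    by (auto simp: mem_beta_set)
qed

lemma strip_rows_if_bead_slide:
  assumes lam: "is_partition lam" and x: "x \<in> beta_set lam" and y: "y \<notin> beta_set lam" "y < x"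
  obtains sg r q where "is_partition sg" "strip_rows lam sg r q" "beta lam r = x" "beta sg q = y"
proof -
  obtain r where r: "1 \<le> r" "beta lam r = x" using x by (auto simp: mem_beta_set)
  define Q where "Q = {j. 1 \<le> j \<and> y < beta lam j}"
  have "Q \<subseteq> {..length lam + nat (- y)}"
  proof
    fix j assume "j \<in> Q"
    then show "j \<in> {..length lam + nat (- y)}"
      using beta_beyond_length[of lam j] by (cases "length lam < j") (auto simp: Q_def)
  qed
  then have finQ: "finite Q" by (rule finite_subset) simp
  define q where "q = Max Q"
  have "r \<in> Q" using r y(2) by (simp add: Q_def)
  then have q: "q \<in> Q" "r \<le> q"
    unfolding q_def using finQ by (auto intro: Max_in)
  have "q + 1 \<notin> Q" using finQ q_def by (metis Max_ge Suc_eq_plus1 not_less_eq_eq order_refl)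
  moreover have "beta lam (q+1) \<noteq> y"
    using y(1) by (auto simp: mem_beta_set)
  ultimately have "beta lam (q+1) < y" by (simp add: Q_def)
  with q obtain sg where "is_partition sg" "strip_rows lam sg r q" "beta sg q = y"
    using strip_rows_exists[OF lam r(1)] by (auto simp: Q_def)
  then show ?thesis using that r by blast
qed

lemma bead_slide_exists:
  assumes "is_partition lam" "x \<in> beta_set lam" "y \<notin> beta_set lam" "y < x"
  obtains sg where "is_partition sg" "bead_slide (beta_set lam) x y (beta_set sg)"
  using strip_rows_if_bead_slide[OF assms] bead_slide_if_strip_rows[OF assms(1)] by metis

lemma bead_slide_if_border_strip:
  assumes lam: "is_partition lam" and "border_strip lam g"
  obtains sg x y where "is_partition sg" "young sg \<subseteq> young lam" "g = young lam - young sg"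
    "bead_slide (beta_set lam) x y (beta_set sg)"
proof -
  obtain sg where sg: "is_partition sg" "young sg \<subseteq> young lam" "g = young lam - young sg"
    and "g \<noteq> {}" "edge_connected g" "no_2x2 g"
    using assms(2) unfolding border_strip_def by blast
  then obtain r q where "strip_rows lam sg r q"
    using strip_rows_if_border_strip[OF lam sg(1,2)] by blast
  then show ?thesis using that sg bead_slide_if_strip_rows[OF lam] by blast
qed

lemma border_strip_if_bead_slide:
  assumes lam: "is_partition lam" and sg: "is_partition sg"
    and slide: "bead_slide (beta_set lam) x y (beta_set sg)"
  shows "young sg \<subseteq> young lam" and "border_strip lam (young lam - young sg)"
    and "int (card (young lam - young sg)) = x - y"
    and "ht (young lam - young sg)
           = int (num_above (beta_set lam) y) - int (num_above (beta_set lam) x) - 1"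
proof -
  have slide': "x \<in> beta_set lam" "y \<notin> beta_set lam" "y < x"
    "beta_set sg = beta_set lam - {x} \<union> {y}"
    using slide unfolding bead_slide_def by auto
  obtain sg' r q where sg': "is_partition sg'" "strip_rows lam sg' r q" "beta lam r = x" "beta sg' q = y"
    using strip_rows_if_bead_slide[OF lam slide'(1-3)] .
  have eq: "young sg' = young sg"
    unfolding young_eq_iff_beta_set_eq[OF sg'(1) sg] beta_set_strip_rows[OF lam sg'(2)]
    using sg'(3,4) slide'(4) by simp
  show sub: "young sg \<subseteq> young lam"
    using young_subset_if_strip_rows[OF lam sg'(2)] eq by simp
  show "border_strip lam (young lam - young sg)"
    using border_strip_if_strip_rows[OF lam sg'(1,2)] eq by simp
  have "beta_set lam - beta_set sg = {x}" "beta_set sg - beta_set lam = {y}"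
    using slide by (auto simp: bead_slide_def)
  then show "int (card (young lam - young sg)) = x - y"
    using card_young_diff[OF sub] psize_diff_eq_sum_beta_set_diff[OF lam sg] by simp
  have r: "1 \<le> r" "r \<le> q" and "beta lam (q+1) < y" "y < beta lam q"
    using sg'(2,4) by (auto simp: strip_rows_def beta_def)
  then have "num_above (beta_set lam) y = q"
    by (intro num_above_between_betas[OF lam]) simp_all
  moreover have "num_above (beta_set lam) x = r - 1"
    using num_above_beta[OF lam r(1)] sg'(3) by simp
  ultimately show "ht (young lam - young sg)
           = int (num_above (beta_set lam) y) - int (num_above (beta_set lam) x) - 1"
    using ht_strip_rows[OF lam sg'(2)] eq r by simp
qed

definition common_strips :: "nat list \<Rightarrow> nat list \<Rightarrow> ((nat \<times> nat) set \<times> (nat \<times> nat) set) set" where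
  "common_strips lam mu =
     {(g, g'). border_strip lam g \<and> border_strip mu g' \<and> young lam - g = young mu - g'}"

lemma common_strips_swap:
  assumes "common_strips mu lam = {(g1, g1'), (g2, g2')}"
  shows "common_strips lam mu = {(g1', g1), (g2', g2)}"
proof -
  have "(g, g') \<in> common_strips lam mu \<longleftrightarrow> (g', g) \<in> common_strips mu lam" for g g'
    by (auto simp: common_strips_def)
  then show ?thesis using assms by auto
qed

lemma common_strips_eq:
  assumes lam: "is_partition lam" and mu: "is_partition mu"
    and sg1: "is_partition sg1" and sg2: "is_partition sg2"
    and slides: "\<And>S. (\<exists>x y. bead_slide (beta_set lam) x y S) \<and> (\<exists>x y. bead_slide (beta_set mu) x y S)
                     \<longleftrightarrow> S = beta_set sg1 \<or> S = beta_set sg2"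
  shows "common_strips lam mu =
    {(young lam - young sg1, young mu - young sg1), (young lam - young sg2, young mu - young sg2)}"
proof
  have common: "(young lam - young sg, young mu - young sg) \<in> common_strips lam mu"
    if sg: "is_partition sg" and S: "beta_set sg = beta_set sg1 \<or> beta_set sg = beta_set sg2" for sg
  proof -
    obtain x y x' y' where "bead_slide (beta_set lam) x y (beta_set sg)"
      "bead_slide (beta_set mu) x' y' (beta_set sg)"
      using slides[of "beta_set sg"] S by blast
    from border_strip_if_bead_slide(1,2)[OF lam sg this(1)] border_strip_if_bead_slide(1,2)[OF mu sg this(2)]
    show ?thesis by (simp add: common_strips_def double_diff)
  qed
  show "{(young lam - young sg1, young mu - young sg1), (young lam - young sg2, young mu - young sg2)}
    \<subseteq> common_strips lam mu"
    using common[OF sg1] common[OF sg2] by simp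
  show "common_strips lam mu \<subseteq>
    {(young lam - young sg1, young mu - young sg1), (young lam - young sg2, young mu - young sg2)}"
  proof
    fix p assume "p \<in> common_strips lam mu"
    then obtain g g' where p: "p = (g, g')" and g: "border_strip lam g" "border_strip mu g'"
      and eq: "young lam - g = young mu - g'"
      by (auto simp: common_strips_def)
    obtain sg x y where sg: "is_partition sg" "young sg \<subseteq> young lam" "g = young lam - young sg"
      "bead_slide (beta_set lam) x y (beta_set sg)"
      using bead_slide_if_border_strip[OF lam g(1)] by blast
    obtain sg' x' y' where sg': "is_partition sg'" "young sg' \<subseteq> young mu" "g' = young mu - young sg'"
      "bead_slide (beta_set mu) x' y' (beta_set sg')"
      using bead_slide_if_border_strip[OF mu g(2)] by blast
    have "young sg = young sg'" using eq sg(2,3) sg'(2,3) by (simp add: double_diff)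
    then have "beta_set sg = beta_set sg'" using young_eq_iff_beta_set_eq[OF sg(1) sg'(1)] by simp
    then have "beta_set sg = beta_set sg1 \<or> beta_set sg = beta_set sg2"
      using slides[of "beta_set sg"] sg(4) sg'(4) by auto
    then have "young sg = young sg1 \<or> young sg = young sg2"
      using young_eq_iff_beta_set_eq[OF sg(1) sg1] young_eq_iff_beta_set_eq[OF sg(1) sg2] by simp
    then show "p \<in> {(young lam - young sg1, young mu - young sg1),
      (young lam - young sg2, young mu - young sg2)}"
      using p sg(3) sg'(3) \<open>young sg = young sg'\<close> by auto
  qed
qed

section \<open>Bead sets differing in two beads\<close>

lemma bead_slides_of_two_bead_difference:
  fixes L M :: "int set"
  assumes L_minus_M: "L - M = {A1, A2}" and M_minus_L: "M - L = {B1, B2}"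
    and order: "A2 < B2" "B2 < B1" "B1 < A1"
  shows "bead_slide L A1 B1 (L - {A1} \<union> {B1})" "bead_slide M B2 A2 (L - {A1} \<union> {B1})"
    "bead_slide L A1 B2 (L - {A1} \<union> {B2})" "bead_slide M B1 A2 (L - {A1} \<union> {B2})"
    "bead_slide (L - {A1} \<union> {B1}) B1 B2 (L - {A1} \<union> {B2})"
proof -
  have L: "A1 \<in> L" "A2 \<in> L" "B1 \<notin> L" "B2 \<notin> L"
    and M: "A1 \<notin> M" "A2 \<notin> M" "B1 \<in> M" "B2 \<in> M"
    using L_minus_M M_minus_L by auto
  have "A1 \<noteq> A2" "B1 \<noteq> B2" using order by simp_all
  then have "L - {A1} \<union> {B1} = M - {B2} \<union> {A2}" "L - {A1} \<union> {B2} = M - {B1} \<union> {A2}"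
    using L_minus_M M_minus_L by blast+
  then show "bead_slide L A1 B1 (L - {A1} \<union> {B1})" "bead_slide M B2 A2 (L - {A1} \<union> {B1})"
    "bead_slide L A1 B2 (L - {A1} \<union> {B2})" "bead_slide M B1 A2 (L - {A1} \<union> {B2})"
    "bead_slide (L - {A1} \<union> {B1}) B1 B2 (L - {A1} \<union> {B2})"
    using L M order unfolding bead_slide_def by auto
qed

lemma common_slides_of_two_bead_difference:
  fixes L M :: "int set"
  assumes L_minus_M: "L - M = {A1, A2}" and M_minus_L: "M - L = {B1, B2}"
    and order: "A2 < B2" "B2 < B1" "B1 < A1"
  shows "(\<exists>x y. bead_slide L x y S) \<and> (\<exists>x y. bead_slide M x y S)
           \<longleftrightarrow> S = L - {A1} \<union> {B1} \<or> S = L - {A1} \<union> {B2}"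
proof
  assume "(\<exists>x y. bead_slide L x y S) \<and> (\<exists>x y. bead_slide M x y S)"
  then obtain x y x' y' where x: "x \<in> L" "y \<notin> L" "y < x" "S = L - {x} \<union> {y}"
    and x': "x' \<in> M" "y' \<notin> M" "S = M - {x'} \<union> {y'}"
    unfolding bead_slide_def by blast
  have "x \<in> {A1, A2}"
  proof (rule ccontr)
    assume "x \<notin> {A1, A2}"
    then have "x \<in> M" "x \<notin> S" "A1 \<in> S" "A2 \<in> S" using L_minus_M x by auto
    then have "x = x'" "A1 = y'" "A2 = y'" using L_minus_M x' by auto
    then show False using order by simp
  qed
  moreover have "y \<in> {B1, B2}"
  proof (rule ccontr)
    assume "y \<notin> {B1, B2}"
    then have "y \<notin> M" "y \<in> S" "B1 \<notin> S" "B2 \<notin> S" using M_minus_L x by auto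
    then have "y = y'" "B1 = x'" "B2 = x'" using M_minus_L x' by auto
    then show False using order by simp
  qed
  ultimately have "x = A1" "y = B1 \<or> y = B2" using x(3) order by auto
  then show "S = L - {A1} \<union> {B1} \<or> S = L - {A1} \<union> {B2}" using x(4) by auto
next
  show "S = L - {A1} \<union> {B1} \<or> S = L - {A1} \<union> {B2}
    \<Longrightarrow> (\<exists>x y. bead_slide L x y S) \<and> (\<exists>x y. bead_slide M x y S)"
    using bead_slides_of_two_bead_difference[OF assms] by blast
qed

lemma num_above_two_bead_difference:
  assumes fin: "finite {z \<in> M. v < z}"
    and L_minus_M: "L - M = {A1, A2}" and M_minus_L: "M - L = {B1, B2}" and "A1 \<noteq> A2" "B1 \<noteq> B2"
  shows "int (num_above L v)
    = int (num_above M v) - of_bool (v < B1) - of_bool (v < B2) + of_bool (v < A1) + of_bool (v < A2)"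
proof -
  have "{B1, B2} \<subseteq> M" "{A1, A2} \<inter> M = {}"
    using L_minus_M M_minus_L by blast+
  then have "int (num_above (M - {B1, B2} \<union> {A1, A2}) v)
      = int (num_above M v) - int (num_above {B1, B2} v) + int (num_above {A1, A2} v)"
    using num_above_replace[OF fin] by blast
  moreover have "M - {B1, B2} \<union> {A1, A2} = L"
    using L_minus_M M_minus_L by blast
  ultimately have "int (num_above L v)
      = int (num_above M v) - int (num_above {B1, B2} v) + int (num_above {A1, A2} v)"
    by simp
  then show ?thesis using assms(4,5) by simp
qed

lemma common_strips_of_ordered_two_bead_difference:
  assumes lam: "is_partition lam" and mu: "is_partition mu"
    and diff_lam: "beta_set lam - beta_set mu = {beta lam a, beta lam b}"
    and diff_mu: "beta_set mu - beta_set lam = {beta mu a', beta mu b'}"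
    and ab: "1 \<le> a" "a < b" and ab': "1 \<le> a'" "a' < b'"
    and sum: "beta lam a + beta lam b = beta mu a' + beta mu b'"
    and less: "beta mu a' < beta lam a"
  shows "\<exists>g1 g1' g2 g2'. common_strips lam mu = {(g1, g1'), (g2, g2')} \<and> (g1, g1') \<noteq> (g2, g2')
    \<and> g1 \<subset> g2 \<and> g1' \<subset> g2'
    \<and> int (card g1) = beta lam a - beta mu a' \<and> int (card g1') = beta lam a - beta mu a'
    \<and> int (card g2) = beta lam a - beta mu b' \<and> int (card g2') = beta lam a - beta mu b'
    \<and> ht g1 = int a' - int a \<and> ht g1' = int b - int b'
    \<and> ht g2 = int b' - int a - 1 \<and> ht g2' = int b - int a'"
proof -
  define L M A1 A2 B1 B2
    where "L = beta_set lam" "M = beta_set mu"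
      "A1 = beta lam a" "A2 = beta lam b" "B1 = beta mu a'" "B2 = beta mu b'"
  note defs = this
  have order: "A2 < B2" "B2 < B1" "B1 < A1" "A2 < A1"
    using beta_strict_antimono[OF lam ab] beta_strict_antimono[OF mu ab'] sum less
    unfolding defs by linarith+
  have L_minus_M: "L - M = {A1, A2}" and M_minus_L: "M - L = {B1, B2}"
    using diff_lam diff_mu unfolding defs .
  note slides = bead_slides_of_two_bead_difference[OF L_minus_M M_minus_L order(1-3)]
  obtain sg1 where sg1: "is_partition sg1" "beta_set sg1 = L - {A1} \<union> {B1}"
    using bead_slide_exists[OF lam] slides(1) unfolding defs bead_slide_def by metis
  obtain sg2 where sg2: "is_partition sg2" "beta_set sg2 = L - {A1} \<union> {B2}"
    using bead_slide_exists[OF lam] slides(3) unfolding defs bead_slide_def by metis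
  have strips: "common_strips lam mu = {(young lam - young sg1, young mu - young sg1),
      (young lam - young sg2, young mu - young sg2)}"
    using common_strips_eq[OF lam mu sg1(1) sg2(1)]
      common_slides_of_two_bead_difference[OF L_minus_M M_minus_L order(1-3)]
    unfolding sg1(2) sg2(2) defs by blast
  note g1 = border_strip_if_bead_slide[OF lam sg1(1), of A1 B1]
    and g1' = border_strip_if_bead_slide[OF mu sg1(1), of B2 A2]
    and g2 = border_strip_if_bead_slide[OF lam sg2(1), of A1 B2]
    and g2' = border_strip_if_bead_slide[OF mu sg2(1), of B1 A2]
  have "young sg2 \<subseteq> young sg1"
    using border_strip_if_bead_slide(1)[OF sg1(1) sg2(1)] slides(5) unfolding sg1(2) sg2(2) by blast
  then have nested: "young lam - young sg1 \<subseteq> young lam - young sg2"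
    "young mu - young sg1 \<subseteq> young mu - young sg2" by blast+
  have above_L: "int (num_above L v)
      = int (num_above M v) - of_bool (v < B1) - of_bool (v < B2) + of_bool (v < A1) + of_bool (v < A2)"
    and above_M: "int (num_above M v)
      = int (num_above L v) - of_bool (v < A1) - of_bool (v < A2) + of_bool (v < B1) + of_bool (v < B2)"
    for v
    using num_above_two_bead_difference[OF _ L_minus_M M_minus_L]
      num_above_two_bead_difference[OF _ M_minus_L L_minus_M]
      finite_beta_set_above[OF lam] finite_beta_set_above[OF mu] order
    unfolding defs by auto
  have index: "num_above L A1 = a - 1" "num_above L A2 = b - 1"
    "num_above M B1 = a' - 1" "num_above M B2 = b' - 1"
    using num_above_beta[OF lam] num_above_beta[OF mu] ab ab' unfolding defs by auto
  show ?thesis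
  proof (intro exI conjI)
    show "common_strips lam mu = {(young lam - young sg1, young mu - young sg1),
      (young lam - young sg2, young mu - young sg2)}" by (rule strips)
    show "int (card (young lam - young sg1)) = beta lam a - beta mu a'"
      "int (card (young mu - young sg1)) = beta lam a - beta mu a'"
      "int (card (young lam - young sg2)) = beta lam a - beta mu b'"
      "int (card (young mu - young sg2)) = beta lam a - beta mu b'"
      using g1(3) g1'(3) g2(3) g2'(3) slides sum unfolding defs sg1(2) sg2(2) by simp_all
    then show "young lam - young sg1 \<subset> young lam - young sg2"
      "young mu - young sg1 \<subset> young mu - young sg2"
      "(young lam - young sg1, young mu - young sg1) \<noteq> (young lam - young sg2, young mu - young sg2)"
      using nested order unfolding defs by auto
    show "ht (young lam - young sg1) = int a' - int a"
      "ht (young mu - young sg1) = int b - int b'"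
      "ht (young lam - young sg2) = int b' - int a - 1"
      "ht (young mu - young sg2) = int b - int a'"
      using g1(4) g1'(4) g2(4) g2'(4) slides above_L[of B1] above_L[of B2] above_M[of A2]
        index order ab ab' unfolding defs sg1(2) sg2(2) by simp_all
  qed
qed

lemma common_strips_of_two_bead_difference:
  assumes lam: "is_partition lam" and mu: "is_partition mu"
    and diff_lam: "beta_set lam - beta_set mu = {beta lam a, beta lam b}"
    and diff_mu: "beta_set mu - beta_set lam = {beta mu a', beta mu b'}"
    and ab: "1 \<le> a" "a < b" and ab': "1 \<le> a'" "a' < b'"
    and size: "psize mu = psize lam"
  shows "\<exists>g1 g1' g2 g2'. common_strips lam mu = {(g1, g1'), (g2, g2')} \<and> (g1, g1') \<noteq> (g2, g2')
     \<and> g1 \<subset> g2 \<and> g1' \<subset> g2'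
     \<and> int (card g1) = \<bar>beta lam a - beta mu a'\<bar> \<and> int (card g1') = \<bar>beta lam a - beta mu a'\<bar>
     \<and> int (card g2) = \<bar>beta lam a - beta mu b'\<bar> \<and> int (card g2') = \<bar>beta lam a - beta mu b'\<bar>
     \<and> (beta mu a' < beta lam a \<longrightarrow>
          ht g1 = int a' - int a \<and> ht g1' = int b - int b' \<and>
          ht g2 = int b' - int a - 1 \<and> ht g2' = int b - int a')
     \<and> (beta lam a < beta mu a' \<longrightarrow>
          ht g1 = int b' - int b \<and> ht g1' = int a - int a' \<and>
          ht g2 = int b' - int a \<and> ht g2' = int b - int a' - 1)"
proof -
  have "beta lam b < beta lam a" "beta mu b' < beta mu a'"
    using beta_strict_antimono lam mu ab ab' by blast+
  then have sum: "beta lam a + beta lam b = beta mu a' + beta mu b'"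
    using psize_diff_eq_sum_beta_set_diff[OF lam mu] size diff_lam diff_mu by simp
  have "beta lam a \<noteq> beta mu a'" using diff_lam diff_mu by blast
  then consider "beta mu a' < beta lam a" | "beta lam a < beta mu a'" by linarith
  then show ?thesis
  proof cases
    case 1
    then obtain g1 g1' g2 g2' where "common_strips lam mu = {(g1, g1'), (g2, g2')}"
      "(g1, g1') \<noteq> (g2, g2')" "g1 \<subset> g2" "g1' \<subset> g2'"
      "int (card g1) = beta lam a - beta mu a'" "int (card g1') = beta lam a - beta mu a'"
      "int (card g2) = beta lam a - beta mu b'" "int (card g2') = beta lam a - beta mu b'"
      "ht g1 = int a' - int a" "ht g1' = int b - int b'"
      "ht g2 = int b' - int a - 1" "ht g2' = int b - int a'"
      using common_strips_of_ordered_two_bead_difference[OF lam mu diff_lam diff_mu ab ab' sum] by blast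
    moreover have abs_eqs: "\<bar>beta lam a - beta mu a'\<bar> = beta lam a - beta mu a'"
      "\<bar>beta lam a - beta mu b'\<bar> = beta lam a - beta mu b'"
      using 1 \<open>beta mu b' < beta mu a'\<close> by linarith+
    moreover have not_2: "\<not> beta lam a < beta mu a'" using 1 by simp
    ultimately show ?thesis
      unfolding abs_eqs
      by (simp (no_asm) only: 1 not_2 simp_thms)
        (intro exI[of _ g1] exI[of _ g1'] exI[of _ g2] exI[of _ g2'] conjI; assumption)
  next
    case 2
    then obtain g1 g1' g2 g2' where "common_strips mu lam = {(g1, g1'), (g2, g2')}"
      "(g1, g1') \<noteq> (g2, g2')" "g1 \<subset> g2" "g1' \<subset> g2'"
      "int (card g1) = beta mu a' - beta lam a" "int (card g1') = beta mu a' - beta lam a"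
      "int (card g2) = beta mu a' - beta lam b" "int (card g2') = beta mu a' - beta lam b"
      "ht g1 = int a - int a'" "ht g1' = int b' - int b"
      "ht g2 = int b - int a' - 1" "ht g2' = int b' - int a"
      using common_strips_of_ordered_two_bead_difference[OF mu lam diff_mu diff_lam ab' ab sum[symmetric]]
      by blast
    moreover have "common_strips lam mu = {(g1', g1), (g2', g2)}"
      using common_strips_swap calculation(1) .
    moreover have "(g1', g1) \<noteq> (g2', g2)" using calculation(2) by auto
    moreover have abs_eqs: "\<bar>beta lam a - beta mu a'\<bar> = beta mu a' - beta lam a"
      "\<bar>beta lam a - beta mu b'\<bar> = beta mu a' - beta lam b"
      using 2 sum \<open>beta lam b < beta lam a\<close> by linarith+
    moreover have not_1: "\<not> beta mu a' < beta lam a" using 2 by simp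
    ultimately show ?thesis
      unfolding abs_eqs
      by (simp (no_asm) only: 2 not_1 simp_thms)
        (intro exI[of _ g1'] exI[of _ g1] exI[of _ g2'] exI[of _ g2] conjI; assumption)
  qed
qed

theorem lemma7:
  fixes lam mu :: "nat list" and a b a' b' :: nat
  assumes "is_partition lam" and "is_partition mu"
    and "psize mu = psize lam"
    and "hamming lam mu = 2"
    and "1 \<le> a" and "a < b" and "1 \<le> a'" and "a' < b'"
    and "S_set lam - S_set mu =
           {real (part lam a) - real a + 1/2, real (part lam b) - real b + 1/2}"
    and "S_set mu - S_set lam =
           {real (part mu a') - real a' + 1/2, real (part mu b') - real b' + 1/2}"
  shows "\<exists>g1 g1' g2 g2'.
     {(g, g'). border_strip lam g \<and> border_strip mu g' \<and> young lam - g = young mu - g'}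
       = {(g1, g1'), (g2, g2')} \<and> (g1, g1') \<noteq> (g2, g2')
     \<and> g1 \<subset> g2 \<and> g1' \<subset> g2'
     \<and> int (card g1) = \<bar>int (part lam a) - int a - int (part mu a') + int a'\<bar>
     \<and> int (card g1') = \<bar>int (part lam a) - int a - int (part mu a') + int a'\<bar>
     \<and> int (card g2) = \<bar>int (part lam a) - int a - int (part mu b') + int b'\<bar>
     \<and> int (card g2') = \<bar>int (part lam a) - int a - int (part mu b') + int b'\<bar>
     \<and> (int (part lam a) - int a > int (part mu a') - int a' \<longrightarrow>
          ht g1 = int a' - int a \<and> ht g1' = int b - int b' \<and>
          ht g2 = int b' - int a - 1 \<and> ht g2' = int b - int a')
     \<and> (int (part lam a) - int a < int (part mu a') - int a' \<longrightarrow>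
          ht g1 = int b' - int b \<and> ht g1' = int a - int a' \<and>
          ht g2 = int b' - int a \<and> ht g2' = int b - int a' - 1)"
proof -
  have diff_lam: "beta_set lam - beta_set mu = {beta lam a, beta lam b}"
    and diff_mu: "beta_set mu - beta_set lam = {beta mu a', beta mu b'}"
    using assms(9,10) by (simp_all add: beta_set_diff_if_S_set_diff)
  have in_beta: "int (part lam a) - int a - int (part mu a') + int a' = beta lam a - beta mu a'"
    "int (part lam a) - int a - int (part mu b') + int b' = beta lam a - beta mu b'"
    "int (part lam a) - int a > int (part mu a') - int a' \<longleftrightarrow> beta mu a' < beta lam a"
    "int (part lam a) - int a < int (part mu a') - int a' \<longleftrightarrow> beta lam a < beta mu a'"
    by (simp_all add: beta_def)
  show ?thesis
    using common_strips_of_two_bead_difference[OF assms(1,2) diff_lam diff_mu assms(5-8,3)]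
    unfolding in_beta common_strips_def .
qed
end
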